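(* Let $\mathbf{A}\in\mathbb{R}^{n\times d}$ with $\mathrm{diag}(\mathbf{A}^T\mathbf{A})=\mathbf{1}$, let $\hat{\mathbf{A}}=[\mathbf{A},-\mathbf{A}]\in\mathbb{R}^{n\times 2d}$ with rows $\hat{\mathbf{a}}_i$, let $y_1,\dots,y_n$ be observations, $\lambda\ge0$, $L$ a non-negative convex loss, and $$F(\mathbf{x})=\sum_{i=1}^n L(\hat{\mathbf{a}}_i^T\mathbf{x},y_i)+\lambda\sum_{j=1}^{2d}x_j,\qquad\mathbf{x}\in\mathbb{R}^{2d}_+.$$ Assume $F$ is convex and there is $\beta>0$ such that for all $\mathbf{x}$ and parallel updates $\Delta\mathbf{x}$ (with $\mathbf{x},\mathbf{x}+\Delta\mathbf{x}\in\mathbb{R}^{2d}_+$), $F(\mathbf{x}+\Delta\mathbf{x})\le F(\mathbf{x})+\Delta\mathbf{x}^T\nabla F(\mathbf{x})+\tfrac{\beta}{2}\Delta\mathbf{x}^T\hat{\mathbf{A}}^T\hat{\mathbf{A}}\Delta\mathbf{x}$. Let $\rho$ be the spectral radius of $\hat{\mathbf{A}}^T\hat{\mathbf{A}}$ and let $P$ be a positive integer with $P<\tfrac{2d}{\rho}+1$. Fix $\mathbf{x}\in\mathbb{R}^{2d}_+$, and for each $j\in\{1,\dots,2d\}$ let $\delta x_j=\max\{-x_j,-(\nabla F(\mathbf{x}))_j/\beta\}$. Let $\mathcal{P}_t$ be a multiset of $P$ indices drawn independently and uniformly from $\{1,\dots,2d\}$, let $\Delta\mathbf{x}$ be the collective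 update $(\Delta\mathbf{x})_k=\sum_{i_j\in\mathcal{P}_t:\,i_j=k}\delta x_{i_j}$, and assume $\mathbf{x}+\Delta\mathbf{x}\in\mathbb{R}^{2d}_+$. Then $$\mathbb{E}_{\mathcal{P}_t}\big[F(\mathbf{x}+\Delta\mathbf{x})-F(\mathbf{x})\big]\le P\,\mathbb{E}_j\Big[\delta x_j(\nabla F(\mathbf{x}))_j+\tfrac{\beta}{2}\Big(1+\tfrac{(P-1)\rho}{2d}\Big)(\delta x_j)^2\Big],$$ where $\mathbb{E}_{\mathcal{P}_t}$ is over the random choice of $\mathcal{P}_t$ and $\mathbb{E}_j$ is over $j$ chosen uniformly at random from $\{1,\dots,2d\}$.
   Context: This is one iteration of Shotgun (parallel stochastic coordinate descent) from the point $\mathbf{x}$: $P$ indices are drawn independently and uniformly, each chosen coordinate receives the Shooting update $\delta x_j$ computed at the same point $\mathbf{x}$, and all are applied simultaneously. Spectral radius means the maximum absolute eigenvalue. (The paper's "$\mathbf{A}^T\mathbf{A}$" here acts on the $2d$ duplicated coordinates, i.e. is $\hat{\mathbf{A}}^T\hat{\mathbf{A}}$.) *)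

theory Defs
  imports "HOL-Analysis.Analysis"
begin

text \<open>Coordinates of the duplicated problem are indexed by the sum type 'd + 'd:
  Inl j is the positive copy of feature j, Inr j the negative copy.\<close>

definition Ahat :: "real^'d^'n \<Rightarrow> real^('d + 'd)^'n" where
  "Ahat A = (\<chi> i k. case k of Inl j \<Rightarrow> A $ i $ j | Inr j \<Rightarrow> - (A $ i $ j))"

definition nonneg_orthant :: "(real^'k) set" where
  "nonneg_orthant = {z. \<forall>j. 0 \<le> z $ j}"

definition shotgun_F ::
  "real^'d^'n \<Rightarrow> ('n \<Rightarrow> real) \<Rightarrow> real \<Rightarrow> (real \<Rightarrow> real \<Rightarrow> real) \<Rightarrow> real^('d + 'd) \<Rightarrow> real" where
  "shotgun_F A y lam L z = (\<Sum>i\<in>UNIV. L (row i (Ahat A) \<bullet> z) (y i)) + lam * (\<Sum>j\<in>UNIV. z $ j)"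

definition cmat :: "real^'n^'m \<Rightarrow> complex^'n^'m" where
  "cmat M = (\<chi> i j. complex_of_real (M $ i $ j))"

definition mat_eigenvalues :: "real^'n^'n \<Rightarrow> complex set" where
  "mat_eigenvalues M = {\<mu>. \<exists>v. v \<noteq> 0 \<and> cmat M *v v = \<mu> *s v}"

definition mat_spectral_radius :: "real^'n^'n \<Rightarrow> real" where
  "mat_spectral_radius M = Max (cmod ` mat_eigenvalues M)"

definition shoot_delta :: "real \<Rightarrow> real^'k \<Rightarrow> real^'k \<Rightarrow> 'k \<Rightarrow> real" where
  "shoot_delta \<beta> g z j = max (- (z $ j)) (- (g $ j) / \<beta>)"

text \<open>Collective update for the draws I s, s < P (a multiset of P indices).\<close>

definition collective_update :: "nat \<Rightarrow> ('k \<Rightarrow> real) \<Rightarrow> (nat \<Rightarrow> 'k) \<Rightarrow> real^'k" where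
  "collective_update P \<delta> I = (\<chi> k. \<Sum>s\<in>{..<P}. if I s = k then \<delta> (I s) else 0)"

end

theory Submission
  imports Defs
begin

text \<open>The expectation over the draws is the normalised sum over all P-tuples I of indices, and
  the smoothness bound reduces the claim to averaging the linear and the quadratic term of the
  collective update, the sum over s < P of \<delta>(I s) times the unit vector at I s. The linear term
  averages to P E_j[\<delta>_j g_j]. In the quadratic term the P diagonal pairs s = t see one uniform
  index and, the Gram matrix M = Ahat^T Ahat having unit diagonal, give P E_j[\<delta>_j^2]; each of the
  P(P - 1) off-diagonal pairs sees two independent uniform indices and gives
  \<delta>^T M \<delta> / (2d)^2 \<le> \<rho> |\<delta>|^2 / (2d)^2 by the Rayleigh bound for the symmetric matrix M.\<close>

lemma sum_PiE_UNIV_indicator: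
  fixes j :: "'a \<Rightarrow> 'k::finite"
  assumes "finite A" "K \<subseteq> A"
  shows "(\<Sum>I\<in>Pi\<^sub>E A (\<lambda>_. UNIV). \<Prod>s\<in>K. if I s = j s then 1 else 0 :: real)
       = real CARD('k) ^ card (A - K)"
proof -
  define f where "f s b = (if s \<in> K then if b = j s then 1 else 0 else 1 :: real)" for s b
  have "(\<Sum>I\<in>Pi\<^sub>E A (\<lambda>_. UNIV). \<Prod>s\<in>A. f s (I s)) = (\<Prod>s\<in>A. \<Sum>b\<in>UNIV. f s b)"
    using assms(1) by (rule prod_sum_PiE[symmetric]) simp
  moreover have "(\<Prod>s\<in>A. f s (I s)) = (\<Prod>s\<in>K. if I s = j s then 1 else 0)" for I
    using assms by (simp add: f_def prod.If_cases Int_absorb1)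
  moreover have "(\<Sum>b\<in>UNIV. f s b) = (if s \<in> K then 1 else real CARD('k))" for s
    by (simp add: f_def)
  then have "(\<Prod>s\<in>A. \<Sum>b\<in>UNIV. f s b) = real CARD('k) ^ card (A - K)"
    using assms by (simp add: prod.If_cases Diff_eq)
  ultimately show ?thesis by simp
qed

lemma sum_PiE_UNIV_coordinate:
  fixes h :: "'k::finite \<Rightarrow> real"
  assumes "finite A" "s \<in> A"
  shows "(\<Sum>I\<in>Pi\<^sub>E A (\<lambda>_. UNIV). h (I s)) = real CARD('k) ^ (card A - 1) * (\<Sum>j\<in>UNIV. h j)"
proof -
  have "h (I s) = (\<Sum>j\<in>UNIV. h j * (\<Prod>r\<in>{s}. if I r = j then 1 else 0))" for I
    by (simp add: if_distrib[of "\<lambda>c. _ * c"] cong: if_cong)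
  then have "(\<Sum>I\<in>Pi\<^sub>E A (\<lambda>_. UNIV). h (I s))
      = (\<Sum>j\<in>UNIV. h j * (\<Sum>I\<in>Pi\<^sub>E A (\<lambda>_. UNIV). \<Prod>r\<in>{s}. if I r = (\<lambda>_. j) r then 1 else 0))"
    by (simp add: sum_distrib_left sum.swap[of _ "Pi\<^sub>E A _"])
  also have "\<dots> = real CARD('k) ^ (card A - 1) * (\<Sum>j\<in>UNIV. h j)"
    using assms by (subst sum_PiE_UNIV_indicator) (auto simp: sum_distrib_right[symmetric] mult.commute)
  finally show ?thesis .
qed

lemma sum_PiE_UNIV_two_coordinates:
  fixes h :: "'k::finite \<Rightarrow> 'k \<Rightarrow> real"
  assumes "finite A" "s \<in> A" "t \<in> A" "s \<noteq> t"
  shows "(\<Sum>I\<in>Pi\<^sub>E A (\<lambda>_. UNIV). h (I s) (I t))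
       = real CARD('k) ^ (card A - 2) * (\<Sum>j\<in>UNIV. \<Sum>k\<in>UNIV. h j k)"
proof -
  define J where "J j k r = (if r = s then j else k)" for j k :: 'k and r
  have "h (I s) (I t) = (\<Sum>j\<in>UNIV. \<Sum>k\<in>UNIV. h j k * (\<Prod>r\<in>{s, t}. if I r = J j k r then 1 else 0))" for I
    using assms(4) by (simp add: J_def if_distrib[of "\<lambda>c. _ * c"] cong: if_cong)
  then have "(\<Sum>I\<in>Pi\<^sub>E A (\<lambda>_. UNIV). h (I s) (I t))
      = (\<Sum>j\<in>UNIV. \<Sum>k\<in>UNIV. h j k * (\<Sum>I\<in>Pi\<^sub>E A (\<lambda>_. UNIV). \<Prod>r\<in>{s, t}. if I r = J j k r then 1 else 0))"
    by (simp add: sum_distrib_left sum.swap[of _ "Pi\<^sub>E A _"])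
  also have "\<dots> = real CARD('k) ^ (card A - 2) * (\<Sum>j\<in>UNIV. \<Sum>k\<in>UNIV. h j k)"
    using assms by (subst sum_PiE_UNIV_indicator)
      (auto simp: card_Diff_subset numeral_2_eq_2 sum_distrib_right[symmetric] mult.commute)
  finally show ?thesis .
qed

lemma average_PiE_UNIV_coordinate:
  fixes h :: "'k::finite \<Rightarrow> real"
  assumes "finite A" "s \<in> A"
  shows "(\<Sum>I\<in>Pi\<^sub>E A (\<lambda>_. UNIV). h (I s)) / real CARD('k) ^ card A = (\<Sum>j\<in>UNIV. h j) / real CARD('k)"
proof -
  have "card A \<noteq> 0"
    using assms by auto
  then obtain n where n: "card A = Suc n"
    by (meson not0_implies_Suc)
  have "(\<Sum>I\<in>Pi\<^sub>E A (\<lambda>_. UNIV). h (I s)) / real CARD('k) ^ card A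
      = (real CARD('k) ^ n * (\<Sum>j\<in>UNIV. h j)) / (real CARD('k) ^ n * real CARD('k))"
    unfolding sum_PiE_UNIV_coordinate[OF assms] n diff_Suc_1 power_Suc2 ..
  also have "\<dots> = (\<Sum>j\<in>UNIV. h j) / real CARD('k)"
    by (rule mult_divide_mult_cancel_left) simp
  finally show ?thesis .
qed

lemma average_PiE_UNIV_two_coordinates:
  fixes h :: "'k::finite \<Rightarrow> 'k \<Rightarrow> real"
  assumes "finite A" "s \<in> A" "t \<in> A" "s \<noteq> t"
  shows "(\<Sum>I\<in>Pi\<^sub>E A (\<lambda>_. UNIV). h (I s) (I t)) / real CARD('k) ^ card A
       = (\<Sum>j\<in>UNIV. \<Sum>k\<in>UNIV. h j k) / real CARD('k) ^ 2"
proof -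
  have "card {s, t} \<le> card A"
    using assms by (intro card_mono) auto
  then have "2 \<le> card A"
    using assms(4) by simp
  then obtain n where n: "card A = n + 2"
    by (intro that[of "card A - 2"]) simp
  have "(\<Sum>I\<in>Pi\<^sub>E A (\<lambda>_. UNIV). h (I s) (I t)) / real CARD('k) ^ card A
      = (real CARD('k) ^ n * (\<Sum>j\<in>UNIV. \<Sum>k\<in>UNIV. h j k)) / (real CARD('k) ^ n * real CARD('k) ^ 2)"
    unfolding sum_PiE_UNIV_two_coordinates[OF assms] n diff_add_inverse2 power_add ..
  also have "\<dots> = (\<Sum>j\<in>UNIV. \<Sum>k\<in>UNIV. h j k) / real CARD('k) ^ 2"
    by (rule mult_divide_mult_cancel_left) simp
  finally show ?thesis .
qed

lemma independent_eigenvectors: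
  fixes C :: "'a::field^'n^'n" and e :: "'a \<Rightarrow> 'a^'n"
  assumes "finite S" and "\<And>\<mu>. \<mu> \<in> S \<Longrightarrow> e \<mu> \<noteq> 0 \<and> C *v e \<mu> = \<mu> *s e \<mu>"
  shows "vec.independent (e ` S) \<and> inj_on e S"
  using assms
proof (induction S rule: finite_induct)
  case empty
  then show ?case by (simp add: vec.independent_empty)
next
  case (insert \<mu> S)
  then have IH: "vec.independent (e ` S)" "inj_on e S" by auto
  have e\<mu>: "e \<mu> \<noteq> 0" "C *v e \<mu> = \<mu> *s e \<mu>" using insert.prems by auto
  have eS: "e \<nu> \<noteq> 0" "C *v e \<nu> = \<nu> *s e \<nu>" if "\<nu> \<in> S" for \<nu> using insert.prems that by auto
  have independent: "\<forall>w\<in>e ` S. c w = 0" if "(\<Sum>w\<in>e ` S. c w *s w) = 0" for c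
    using IH(1) that by (simp add: vec.independent_explicit)
  have not_in_span: "e \<mu> \<notin> vec.span (e ` S)"
  proof
    assume "e \<mu> \<in> vec.span (e ` S)"
    then obtain u where "e \<mu> = (\<Sum>w\<in>e ` S. u w *s w)"
      using vec.span_finite[of "e ` S"] insert.hyps(1) by auto
    then have u: "e \<mu> = (\<Sum>\<nu>\<in>S. u (e \<nu>) *s e \<nu>)"
      by (simp add: sum.reindex[OF IH(2)])
    \<comment> \<open>C - \<mu> annihilates e \<mu> and rescales each e \<nu> by \<nu> - \<mu> \<noteq> 0.\<close>
    have "0 = C *v e \<mu> - \<mu> *s e \<mu>" using e\<mu>(2) by simp
    also have "\<dots> = (\<Sum>\<nu>\<in>S. u (e \<nu>) *s (C *v e \<nu>) - (\<mu> * u (e \<nu>)) *s e \<nu>)"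
      by (subst (1 2) u) (simp add: vec.sum vec.scale vec.scale_sum_right vector_smult_assoc sum_subtractf)
    also have "\<dots> = (\<Sum>\<nu>\<in>S. (u (e \<nu>) * (\<nu> - \<mu>)) *s e \<nu>)"
      by (rule sum.cong) (auto simp: eS vector_smult_assoc algebra_simps vec.scale_left_diff_distrib)
    also have "\<dots> = (\<Sum>w\<in>e ` S. (u w * (inv_into S e w - \<mu>)) *s w)"
      by (simp add: sum.reindex[OF IH(2)] inv_into_f_f[OF IH(2)])
    finally have "(\<Sum>w\<in>e ` S. (u w * (inv_into S e w - \<mu>)) *s w) = 0"
      by (rule sym)
    then have "\<forall>w\<in>e ` S. u w * (inv_into S e w - \<mu>) = 0"
      by (rule independent)
    then have "u (e \<nu>) = 0" if "\<nu> \<in> S" for \<nu>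
      using that insert.hyps(2) by (auto simp: inv_into_f_f[OF IH(2)])
    then have "e \<mu> = 0" using u by simp
    then show False using e\<mu>(1) by simp
  qed
  moreover have "e \<mu> \<notin> e ` S"
    using not_in_span vec.span_base by blast
  ultimately show ?case using IH insert.hyps by (auto simp: vec.independent_insert)
qed

lemma finite_mat_eigenvalues: "finite (mat_eigenvalues (M :: real^'n^'n))"
proof -
  have "finite (mat_eigenvalues M) \<and> card (mat_eigenvalues M) \<le> CARD('n)"
  proof (rule finite_if_finite_subsets_card_bdd)
    fix S assume S: "S \<subseteq> mat_eigenvalues M" "finite S"
    define e where "e \<mu> = (SOME v. v \<noteq> 0 \<and> cmat M *v v = \<mu> *s v)" for \<mu>
    have "e \<mu> \<noteq> 0 \<and> cmat M *v e \<mu> = \<mu> *s e \<mu>" if "\<mu> \<in> S" for \<mu>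
    proof -
      have "\<exists>v. v \<noteq> 0 \<and> cmat M *v v = \<mu> *s v"
        using S that unfolding mat_eigenvalues_def by auto
      then show ?thesis unfolding e_def by (rule someI_ex)
    qed
    with independent_eigenvectors[OF S(2)] have "vec.independent (e ` S)" "inj_on e S"
      by blast+
    then have "card S = vec.dim (e ` S)" by (simp add: vec.dim_eq_card_independent card_image)
    also have "\<dots> \<le> CARD('n)" by (rule dim_subset_UNIV_cart_gen)
    finally show "card S \<le> CARD('n)" .
  qed
  then show ?thesis by simp
qed

lemma mat_eigenvalue_le_spectral_radius:
  "\<mu> \<in> mat_eigenvalues M \<Longrightarrow> cmod \<mu> \<le> mat_spectral_radius M"
  unfolding mat_spectral_radius_def by (simp add: finite_mat_eigenvalues)

lemma real_eigenvector_imp_mat_eigenvalue: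
  fixes M :: "real^'n^'n"
  assumes "v \<noteq> 0" "M *v v = \<mu> *\<^sub>R v"
  shows "complex_of_real \<mu> \<in> mat_eigenvalues M"
proof -
  define cv where "cv = (\<chi> i. complex_of_real (v $ i))"
  have "cv \<noteq> 0"
    using assms(1) by (auto simp: cv_def vec_eq_iff)
  moreover have "(cmat M *v cv) $ i = complex_of_real ((M *v v) $ i)" for i
    by (simp add: cmat_def cv_def matrix_vector_mult_def)
  then have "cmat M *v cv = complex_of_real \<mu> *s cv"
    using assms(2) by (simp add: vec_eq_iff cv_def)
  ultimately show ?thesis unfolding mat_eigenvalues_def by blast
qed

lemma linear_plus_quadratic_nonpos_imp_zero:
  fixes a b :: real
  assumes "\<And>t. a * t + b * t\<^sup>2 \<le> 0"
  shows "a = 0"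
proof -
  define c where "c = \<bar>b\<bar> + 1"
  have "c > 0" "c + b > 0" by (auto simp: c_def)
  have "a\<^sup>2 * (c + b) / c\<^sup>2 = a * (a / c) + b * (a / c)\<^sup>2"
    using \<open>c > 0\<close> by (simp add: field_simps power2_eq_square)
  also have "\<dots> \<le> 0" by (rule assms)
  finally have "a\<^sup>2 * (c + b) \<le> 0"
    using \<open>c > 0\<close> by (simp add: divide_le_0_iff)
  then show ?thesis
    using \<open>c + b > 0\<close> by (simp add: mult_le_0_iff)
qed

lemma quadratic_form_le_of_sphere:
  fixes M :: "real^'k^'k"
  assumes "\<And>y. y \<in> sphere 0 1 \<Longrightarrow> y \<bullet> (M *v y) \<le> \<mu>"
  shows "z \<bullet> (M *v z) \<le> \<mu> * (z \<bullet> z)"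
proof (cases "z = 0")
  case False
  define y where "y = (1 / norm z) *\<^sub>R z"
  have "y \<in> sphere 0 1" using False by (simp add: y_def)
  then have "y \<bullet> (M *v y) \<le> \<mu>" by (rule assms)
  moreover have "y \<bullet> (M *v y) = z \<bullet> (M *v z) / (z \<bullet> z)"
    by (simp add: y_def matrix_vector_mult_scaleR power2_norm_eq_inner[symmetric] power2_eq_square)
  ultimately have "z \<bullet> (M *v z) / (z \<bullet> z) \<le> \<mu>"
    by simp
  moreover have "z \<bullet> z > 0"
    using False by simp
  ultimately show ?thesis
    by (simp add: pos_divide_le_eq mult.commute)
qed simp

text \<open>A vector attaining the Rayleigh bound of a symmetric matrix is an eigenvector: moving
  from v towards the residual w = M v - \<mu> v changes the bound's slack to first order by 2 (w \<bullet> w).\<close>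

lemma quadratic_form_extremal_imp_eigenvector:
  fixes M :: "real^'k^'k"
  assumes sym: "transpose M = M"
    and bound: "\<And>z. z \<bullet> (M *v z) \<le> \<mu> * (z \<bullet> z)"
    and extremal: "v \<bullet> (M *v v) = \<mu> * (v \<bullet> v)"
  shows "M *v v = \<mu> *\<^sub>R v"
proof -
  define w where "w = M *v v - \<mu> *\<^sub>R v"
  have "w \<bullet> (M *v v) = v \<bullet> (M *v w)"
    by (metis dot_lmul_matrix inner_commute sym vector_transpose_matrix)
  then have "(v + t *\<^sub>R w) \<bullet> (M *v (v + t *\<^sub>R w)) - \<mu> * ((v + t *\<^sub>R w) \<bullet> (v + t *\<^sub>R w))
      = 2 * (w \<bullet> w) * t + (w \<bullet> (M *v w) - \<mu> * (w \<bullet> w)) * t\<^sup>2" for t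
    using extremal by (simp add: w_def matrix_vector_right_distrib matrix_vector_mult_scaleR
        inner_add_left inner_add_right inner_diff_left inner_commute power2_eq_square algebra_simps)
  then have "2 * (w \<bullet> w) * t + (w \<bullet> (M *v w) - \<mu> * (w \<bullet> w)) * t\<^sup>2 \<le> 0" for t
    by (metis bound diff_le_0_iff_le)
  then have "2 * (w \<bullet> w) = 0"
    by (rule linear_plus_quadratic_nonpos_imp_zero)
  then show ?thesis by (simp add: w_def)
qed

lemma quadratic_form_le_mat_spectral_radius:
  fixes M :: "real^'k^'k"
  assumes sym: "transpose M = M"
  shows "x \<bullet> (M *v x) \<le> mat_spectral_radius M * (x \<bullet> x)"
proof -
  have "continuous_on (sphere 0 1) (\<lambda>z. z \<bullet> (M *v z))"
    by (intro continuous_intros linear_continuous_on matrix_vector_mul_linear bounded_linear_intros)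
  moreover have "sphere (0::real^'k) 1 \<noteq> {}" by simp
  ultimately obtain v where v: "v \<in> sphere 0 1"
    and max: "\<And>y. y \<in> sphere 0 1 \<Longrightarrow> y \<bullet> (M *v y) \<le> v \<bullet> (M *v v)"
    using continuous_attains_sup[OF compact_sphere] by blast
  define \<mu> where "\<mu> = v \<bullet> (M *v v)"
  have bound: "z \<bullet> (M *v z) \<le> \<mu> * (z \<bullet> z)" for z
    unfolding \<mu>_def using max by (rule quadratic_form_le_of_sphere)
  have "v \<bullet> v = 1"
    using v by (simp add: power2_norm_eq_inner[symmetric])
  then have "M *v v = \<mu> *\<^sub>R v"
    using quadratic_form_extremal_imp_eigenvector[OF sym bound] by (simp add: \<mu>_def)
  moreover have "v \<noteq> 0" using v by auto
  ultimately have "complex_of_real \<mu> \<in> mat_eigenvalues M"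
    by (intro real_eigenvector_imp_mat_eigenvalue)
  then have "\<bar>\<mu>\<bar> \<le> mat_spectral_radius M"
    using mat_eigenvalue_le_spectral_radius by fastforce
  then have "\<mu> * (x \<bullet> x) \<le> mat_spectral_radius M * (x \<bullet> x)"
    by (intro mult_right_mono) auto
  then show ?thesis using bound[of x] by linarith
qed

lemma collective_update_eq_sum_axis:
  "collective_update P \<delta> I = (\<Sum>s<P. \<delta> (I s) *\<^sub>R axis (I s) (1::real))"
  unfolding collective_update_def
  by (simp add: vec_eq_iff sum_component axis_def if_distrib[of "\<lambda>z. _ * z"] eq_commute cong: if_cong)

lemma inner_collective_update:
  fixes g :: "real^'k"
  shows "collective_update P \<delta> I \<bullet> g = (\<Sum>s<P. \<delta> (I s) * g $ I s)"
  by (simp add: collective_update_eq_sum_axis inner_sum_left inner_axis')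

lemma quadratic_form_collective_update:
  fixes M :: "real^'k^'k"
  shows "collective_update P \<delta> I \<bullet> (M *v collective_update P \<delta> I)
     = (\<Sum>s<P. \<Sum>t<P. \<delta> (I s) * \<delta> (I t) * M $ I s $ I t)"
proof -
  have "M *v collective_update P \<delta> I = (\<Sum>t<P. \<delta> (I t) *\<^sub>R (M *v axis (I t) 1))"
    by (simp add: collective_update_eq_sum_axis vec.sum matrix_vector_mult_scaleR)
  then have "collective_update P \<delta> I \<bullet> (M *v collective_update P \<delta> I)
      = (\<Sum>t<P. \<Sum>s<P. \<delta> (I t) * (\<delta> (I s) * M $ I s $ I t))"
    by (simp add: collective_update_eq_sum_axis inner_sum_left inner_sum_right inner_axis'
        matrix_vector_mult_basis column_def sum_component sum_distrib_left mult.assoc)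
  also have "\<dots> = (\<Sum>s<P. \<Sum>t<P. \<delta> (I s) * \<delta> (I t) * M $ I s $ I t)"
    by (subst sum.swap) (simp add: ac_simps)
  finally show ?thesis .
qed

lemma average_inner_collective_update:
  fixes g :: "real^'k::finite"
  shows "(\<Sum>I\<in>Pi\<^sub>E {..<P} (\<lambda>_. UNIV). collective_update P \<delta> I \<bullet> g) / real CARD('k) ^ P
       = real P * ((\<Sum>j\<in>UNIV. \<delta> j * g $ j) / real CARD('k))"
proof -
  have "(\<Sum>I\<in>Pi\<^sub>E {..<P} (\<lambda>_. UNIV). collective_update P \<delta> I \<bullet> g) / real CARD('k) ^ P
      = (\<Sum>s<P. (\<Sum>I\<in>Pi\<^sub>E {..<P} (\<lambda>_. UNIV). \<delta> (I s) * g $ I s) / real CARD('k) ^ card {..<P})"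
    by (simp add: inner_collective_update sum_divide_distrib sum.swap[of _ "Pi\<^sub>E _ _"])
  also have "\<dots> = (\<Sum>s<P. (\<Sum>j\<in>UNIV. \<delta> j * g $ j) / real CARD('k))"
    by (intro sum.cong refl average_PiE_UNIV_coordinate) auto
  finally show ?thesis by simp
qed

lemma average_quadratic_form_collective_update:
  fixes M :: "real^'k::finite^'k" and \<delta> :: "'k \<Rightarrow> real"
  defines "d \<equiv> \<chi> j. \<delta> j"
  shows "(\<Sum>I\<in>Pi\<^sub>E {..<P} (\<lambda>_. UNIV). collective_update P \<delta> I \<bullet> (M *v collective_update P \<delta> I))
           / real CARD('k) ^ P
       = real P * ((\<Sum>j\<in>UNIV. (\<delta> j)\<^sup>2 * M $ j $ j) / real CARD('k)
                   + (real P - 1) * (d \<bullet> (M *v d)) / real CARD('k) ^ 2)"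
proof -
  define \<Omega> where "\<Omega> = Pi\<^sub>E {..<P} (\<lambda>_. UNIV :: 'k set)"
  define N where "N = real CARD('k) ^ card {..<P}"
  define q where "q I s t = \<delta> (I s) * \<delta> (I t) * M $ I s $ I t" for I :: "nat \<Rightarrow> 'k" and s t
  have diagonal: "(\<Sum>I\<in>\<Omega>. q I s s) / N = (\<Sum>j\<in>UNIV. (\<delta> j)\<^sup>2 * M $ j $ j) / real CARD('k)"
    if "s < P" for s
    using average_PiE_UNIV_coordinate[of "{..<P}" s "\<lambda>j. \<delta> j * \<delta> j * M $ j $ j"] that
    by (simp add: \<Omega>_def N_def q_def power2_eq_square)
  have off_diagonal: "(\<Sum>I\<in>\<Omega>. q I s t) / N = (d \<bullet> (M *v d)) / real CARD('k) ^ 2"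
    if "s < P" "t < P" "s \<noteq> t" for s t
    using average_PiE_UNIV_two_coordinates[of "{..<P}" s t "\<lambda>j k. \<delta> j * \<delta> k * M $ j $ k"] that
    by (simp add: \<Omega>_def N_def q_def d_def inner_vec_def matrix_vector_mult_def sum_distrib_left ac_simps)
  have row: "(\<Sum>I\<in>\<Omega>. \<Sum>t<P. q I s t) / N
      = (\<Sum>j\<in>UNIV. (\<delta> j)\<^sup>2 * M $ j $ j) / real CARD('k) + (real P - 1) * (d \<bullet> (M *v d)) / real CARD('k) ^ 2"
    if s: "s < P" for s
  proof -
    have "(\<Sum>I\<in>\<Omega>. \<Sum>t<P. q I s t) = (\<Sum>I\<in>\<Omega>. q I s s) + (\<Sum>t\<in>{..<P} - {s}. \<Sum>I\<in>\<Omega>. q I s t)"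
      using s by (simp add: sum.remove[of "{..<P}" s] sum.distrib sum.swap[of _ \<Omega>])
    then have "(\<Sum>I\<in>\<Omega>. \<Sum>t<P. q I s t) / N
        = (\<Sum>I\<in>\<Omega>. q I s s) / N + (\<Sum>t\<in>{..<P} - {s}. (\<Sum>I\<in>\<Omega>. q I s t) / N)"
      by (simp add: add_divide_distrib sum_divide_distrib)
    also have "(\<Sum>t\<in>{..<P} - {s}. (\<Sum>I\<in>\<Omega>. q I s t) / N)
        = (\<Sum>t\<in>{..<P} - {s}. (d \<bullet> (M *v d)) / real CARD('k) ^ 2)"
      using s by (intro sum.cong refl off_diagonal) auto
    finally show ?thesis
      using s diagonal by (simp add: of_nat_diff)
  qed
  have "(\<Sum>I\<in>\<Omega>. collective_update P \<delta> I \<bullet> (M *v collective_update P \<delta> I)) / N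
      = (\<Sum>s<P. (\<Sum>I\<in>\<Omega>. \<Sum>t<P. q I s t) / N)"
    by (simp add: quadratic_form_collective_update q_def sum_divide_distrib sum.swap[of _ \<Omega>])
  also have "\<dots> = (\<Sum>s<P. (\<Sum>j\<in>UNIV. (\<delta> j)\<^sup>2 * M $ j $ j) / real CARD('k)
                       + (real P - 1) * (d \<bullet> (M *v d)) / real CARD('k) ^ 2)"
    by (intro sum.cong refl row) auto
  finally show ?thesis
    by (simp add: \<Omega>_def N_def)
qed

lemma diag_Ahat_gram:
  assumes "\<forall>j. (transpose A ** A) $ j $ j = 1"
  shows "(transpose (Ahat A) ** Ahat A) $ k $ k = 1"
  using assms by (cases k) (simp_all add: Ahat_def matrix_matrix_mult_def transpose_def)

lemma average_quadratic_model_collective_update_le: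
  fixes M :: "real^'k::finite^'k" and g :: "real^'k" and \<delta> :: "'k \<Rightarrow> real"
    and P :: nat and \<beta> :: real
  defines "\<Delta> \<equiv> collective_update P \<delta>" and "N \<equiv> real CARD('k)"
  assumes sym: "transpose M = M" and unit_diag: "\<And>j. M $ j $ j = 1"
    and beta: "\<beta> \<ge> 0" and P_pos: "P > 0"
  shows "(\<Sum>I\<in>Pi\<^sub>E {..<P} (\<lambda>_. UNIV). \<Delta> I \<bullet> g + \<beta> / 2 * (\<Delta> I \<bullet> (M *v \<Delta> I))) / N ^ P
       \<le> real P * ((\<Sum>j\<in>UNIV. \<delta> j * g $ j
            + \<beta> / 2 * (1 + (real P - 1) * mat_spectral_radius M / N) * (\<delta> j)\<^sup>2) / N)"
proof -
  define d where "d = (\<chi> j. \<delta> j)"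
  have "N > 0" by (simp add: N_def)
  have "(\<Sum>I\<in>Pi\<^sub>E {..<P} (\<lambda>_. UNIV). \<Delta> I \<bullet> g + \<beta> / 2 * (\<Delta> I \<bullet> (M *v \<Delta> I))) / N ^ P
      = (\<Sum>I\<in>Pi\<^sub>E {..<P} (\<lambda>_. UNIV). \<Delta> I \<bullet> g) / N ^ P
        + \<beta> / 2 * ((\<Sum>I\<in>Pi\<^sub>E {..<P} (\<lambda>_. UNIV). \<Delta> I \<bullet> (M *v \<Delta> I)) / N ^ P)"
    by (simp only: sum.distrib add_divide_distrib sum_distrib_left[symmetric] times_divide_eq_right)
  also have "\<dots> = real P * ((\<Sum>j\<in>UNIV. \<delta> j * g $ j) / N)
      + \<beta> / 2 * (real P * ((d \<bullet> d) / N + (real P - 1) * (d \<bullet> (M *v d)) / N ^ 2))"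
  proof -
    have "(\<Sum>j\<in>UNIV. (\<delta> j)\<^sup>2 * M $ j $ j) = d \<bullet> d"
      by (simp add: d_def unit_diag inner_vec_def power2_eq_square)
    then show ?thesis
      using average_quadratic_form_collective_update[of P \<delta> M]
      unfolding N_def \<Delta>_def d_def[symmetric] average_inner_collective_update by simp
  qed
  also have "\<dots> \<le> real P * ((\<Sum>j\<in>UNIV. \<delta> j * g $ j) / N)
      + \<beta> / 2 * (real P * ((d \<bullet> d) / N + (real P - 1) * (mat_spectral_radius M * (d \<bullet> d)) / N ^ 2))"
    using quadratic_form_le_mat_spectral_radius[OF sym, of d] beta P_pos
    by (intro add_left_mono mult_left_mono divide_right_mono add_mono) auto
  also have "\<dots> = real P * (((\<Sum>j\<in>UNIV. \<delta> j * g $ j)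
      + \<beta> / 2 * (1 + (real P - 1) * mat_spectral_radius M / N) * (d \<bullet> d)) / N)"
    using \<open>N > 0\<close> by (simp add: field_simps power2_eq_square)
  also have "(\<Sum>j\<in>UNIV. \<delta> j * g $ j) + c * (d \<bullet> d) = (\<Sum>j\<in>UNIV. \<delta> j * g $ j + c * (\<delta> j)\<^sup>2)" for c
    by (simp add: d_def inner_vec_def sum.distrib sum_distrib_left power2_eq_square)
  finally show ?thesis .
qed

theorem lemma3p3:
  fixes A :: "real^'d^'n" and y :: "'n \<Rightarrow> real" and lam :: real
    and L :: "real \<Rightarrow> real \<Rightarrow> real" and gradF :: "real^('d + 'd) \<Rightarrow> real^('d + 'd)"
    and \<beta> :: real and P :: nat and x :: "real^('d + 'd)"
  defines "F \<equiv> shotgun_F A y lam L"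
    and "\<rho> \<equiv> mat_spectral_radius (transpose (Ahat A) ** Ahat A)"
    and "\<delta> \<equiv> shoot_delta \<beta> (gradF x) x"
  assumes diag: "\<forall>j. (transpose A ** A) $ j $ j = 1"
    and lam: "lam \<ge> 0"
    and L_nonneg: "\<forall>u v. L u v \<ge> 0"
    and L_convex: "\<forall>v. convex_on UNIV (\<lambda>u. L u v)"
    and F_convex: "convex_on nonneg_orthant F"
    and grad: "\<forall>z\<in>nonneg_orthant. (F has_derivative (\<lambda>h. gradF z \<bullet> h)) (at z within nonneg_orthant)"
    and beta_pos: "\<beta> > 0"
    and smooth: "\<forall>z \<Delta>. z \<in> nonneg_orthant \<longrightarrow> z + \<Delta> \<in> nonneg_orthant \<longrightarrow>
         F (z + \<Delta>) \<le> F z + \<Delta> \<bullet> gradF z + \<beta> / 2 * (\<Delta> \<bullet> ((transpose (Ahat A) ** Ahat A) *v \<Delta>))"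
    and P_pos: "P > 0"
    and P_bound: "real P < 2 * real CARD('d) / \<rho> + 1"
    and x_nonneg: "x \<in> nonneg_orthant"
    and feasible: "\<forall>I \<in> Pi\<^sub>E {..<P} (\<lambda>_. UNIV). x + collective_update P \<delta> I \<in> nonneg_orthant"
  shows "(\<Sum>I \<in> Pi\<^sub>E {..<P} (\<lambda>_. UNIV). F (x + collective_update P \<delta> I) - F x)
            / (2 * real CARD('d)) ^ P
         \<le> real P * ((\<Sum>j\<in>UNIV. \<delta> j * gradF x $ j
              + \<beta> / 2 * (1 + (real P - 1) * \<rho> / (2 * real CARD('d))) * (\<delta> j)^2)
              / (2 * real CARD('d)))"
proof -
  define M where "M = transpose (Ahat A) ** Ahat A"
  define \<Delta> where "\<Delta> = collective_update P \<delta>"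
  have N: "real CARD('d + 'd) = 2 * real CARD('d)"
    by simp
  have "F (x + \<Delta> I) - F x \<le> \<Delta> I \<bullet> gradF x + \<beta> / 2 * (\<Delta> I \<bullet> (M *v \<Delta> I))"
    if "I \<in> Pi\<^sub>E {..<P} (\<lambda>_. UNIV)" for I
    using smooth[rule_format, OF x_nonneg] feasible that unfolding \<Delta>_def M_def by fastforce
  then have "(\<Sum>I \<in> Pi\<^sub>E {..<P} (\<lambda>_. UNIV). F (x + \<Delta> I) - F x) / real CARD('d + 'd) ^ P
      \<le> (\<Sum>I \<in> Pi\<^sub>E {..<P} (\<lambda>_. UNIV). \<Delta> I \<bullet> gradF x + \<beta> / 2 * (\<Delta> I \<bullet> (M *v \<Delta> I)))
          / real CARD('d + 'd) ^ P"
    by (intro divide_right_mono sum_mono) auto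
  also have "\<dots> \<le> real P * ((\<Sum>j\<in>UNIV. \<delta> j * gradF x $ j
      + \<beta> / 2 * (1 + (real P - 1) * mat_spectral_radius M / real CARD('d + 'd)) * (\<delta> j)\<^sup>2)
      / real CARD('d + 'd))"
    unfolding \<Delta>_def using beta_pos P_pos diag_Ahat_gram[OF diag]
    by (intro average_quadratic_model_collective_update_le) (auto simp: M_def matrix_transpose_mul)
  finally show ?thesis
    by (simp only: \<rho>_def M_def \<Delta>_def N)
qed

end
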